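(* Let $X$ be a Banach algebra with unit element $\mathbf{1}$. Suppose $h:X\to X$ satisfies $$\|h(xyx)-h(x)yx-xh(y)x-xyh(x)\|\le\theta(\|x\|^p+\|y\|^q+\|x\|^r\|y\|^s),$$ $$\|h(x+y)-h(x)-h(y)\|\le\theta(\|x\|^p+\|y\|^q+\|x\|^r\|y\|^s)$$ for all $x,y\in X$, for some constants $\theta,p,q,r,s\in(0,1)$ with $r+s<1$. Then $h$ is a Jordan triple derivation.
   Context: A Jordan triple derivation on an algebra $X$ is an additive map $D:X\to X$ with $D(xyx)=D(x)yx+xD(y)x+xyD(x)$ for all $x,y\in X$. *)

theory Defs
  imports "HOL-Analysis.Analysis"
begin

definition additive_map :: "('a::plus \<Rightarrow> 'a) \<Rightarrow> bool" where
  "additive_map D \<longleftrightarrow> (\<forall>x y. D (x + y) = D x + D y)"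

definition jordan_triple_derivation :: "('a::ring \<Rightarrow> 'a) \<Rightarrow> bool" where
  "jordan_triple_derivation D \<longleftrightarrow> additive_map D \<and>
     (\<forall>x y. D (x * y * x) = D x * y * x + x * D y * x + x * y * D x)"

end

theory Submission
  imports Defs "HOL-Library.Landau_Symbols"
begin

text \<open>Sandwiching by the scalar t1 multiplies by t^2, so in the approximate Jordan identity at
  x = t1 the value h(t^2 y) - t^2 h(y) equals a term linear in y up to O(t^p + t^r). Hence t^2 times
  the additive defect at (y, z) differs by O(t^p + t^r) from the additive defect at (t^2 y, t^2 z),
  which is O(t^(2p) + t^(2q) + t^(2(r+s))). All of this is o(t^2), so h is additive.
  Then h is homogeneous over the naturals, so the Jordan defect at (nx, y) is n^2 times the one
  at (x, y), while the hypothesis bounds it by O(n^p + n^r); letting n tend to infinity gives the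
  Jordan identity.\<close>

definition additive_defect :: "('a::ab_group_add \<Rightarrow> 'a) \<Rightarrow> 'a \<Rightarrow> 'a \<Rightarrow> 'a" where
  "additive_defect h x y = h (x + y) - h x - h y"

definition jordan_defect :: "('a::ring \<Rightarrow> 'a) \<Rightarrow> 'a \<Rightarrow> 'a \<Rightarrow> 'a" where
  "jordan_defect h x y = h (x * y * x) - h x * y * x - x * h y * x - x * y * h x"

text \<open>The terms of the three Jordan defects that are linear in the middle argument cancel.\<close>

lemma additive_defect_scaleR_square:
  fixes h :: "'a::real_algebra_1 \<Rightarrow> 'a"
  shows "(t * t) *\<^sub>R additive_defect h y z
    = additive_defect h ((t * t) *\<^sub>R y) ((t * t) *\<^sub>R z) - jordan_defect h (of_real t) (y + z)
      + jordan_defect h (of_real t) y + jordan_defect h (of_real t) z"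
proof -
  have sandwich: "of_real t * w * of_real t = (t * t) *\<^sub>R w" for w :: 'a
    by (simp add: of_real_def)
  show ?thesis
    unfolding additive_defect_def jordan_defect_def sandwich by (simp add: algebra_simps)
qed

lemma norm_additive_defect_le_jordan_defects:
  fixes h :: "'a::real_normed_algebra_1 \<Rightarrow> 'a"
  shows "t * t * norm (additive_defect h y z)
    \<le> norm (additive_defect h ((t * t) *\<^sub>R y) ((t * t) *\<^sub>R z)) + norm (jordan_defect h (of_real t) (y + z))
      + norm (jordan_defect h (of_real t) y) + norm (jordan_defect h (of_real t) z)"
proof -
  define A where "A = additive_defect h ((t * t) *\<^sub>R y) ((t * t) *\<^sub>R z)"
  define J where "J w = jordan_defect h (of_real t) w" for w
  have "t * t * norm (additive_defect h y z) = norm (A - J (y + z) + J y + J z)"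
    unfolding A_def J_def additive_defect_scaleR_square[symmetric] by simp
  also have "\<dots> \<le> norm A + norm (J (y + z)) + norm (J y) + norm (J z)"
    using norm_triangle_ineq[of "A - J (y + z) + J y" "J z"]
      norm_triangle_ineq[of "A - J (y + z)" "J y"] norm_triangle_ineq4[of A "J (y + z)"]
    by linarith
  finally show ?thesis
    unfolding A_def J_def .
qed

lemma additive_map_scaleR_of_nat:
  fixes h :: "'a::real_vector \<Rightarrow> 'a"
  assumes "additive_map h"
  shows "h (real n *\<^sub>R x) = real n *\<^sub>R h x"
proof -
  have "h 0 = 0"
    using assms[unfolded additive_map_def, rule_format, of 0 0] by simp
  then show ?thesis
    using assms by (induction n) (simp_all add: additive_map_def scaleR_add_left)
qed

lemma jordan_defect_scaleR_of_nat:
  fixes h :: "'a::real_algebra \<Rightarrow> 'a"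
  assumes "additive_map h"
  shows "jordan_defect h (real n *\<^sub>R x) y = (real n * real n) *\<^sub>R jordan_defect h x y"
proof -
  have "h ((real n * real n) *\<^sub>R w) = (real n * real n) *\<^sub>R h w" for w
    using additive_map_scaleR_of_nat[OF assms, of "n * n"] by simp
  then show ?thesis
    unfolding jordan_defect_def by (simp add: additive_map_scaleR_of_nat[OF assms] algebra_simps)
qed

lemma nonpos_if_mult_le_smallo:
  fixes e :: real
  assumes "f \<in> o[F](g)" "F \<noteq> bot" "\<forall>\<^sub>F x in F. 0 < g x \<and> g x * e \<le> f x"
  shows "e \<le> 0"
proof (rule tendsto_lowerbound[OF smalloD_tendsto[OF assms(1)] _ assms(2)])
  show "\<forall>\<^sub>F x in F. e \<le> f x / g x"
    using assms(3) by eventually_elim (simp add: field_simps)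
qed

lemma const_mult_powr_smallo_powr:
  assumes "\<alpha> < \<beta>"
  shows "(\<lambda>n::nat. c * real n powr \<alpha>) \<in> o(\<lambda>n. real n powr \<beta>)"
proof (cases "c = 0")
  case False
  then show ?thesis
    using assms by (simp add: powr_smallo_iff filterlim_real_sequentially)
qed simp

lemma additive_map_if_defects_powr_bounded:
  fixes h :: "'a::real_normed_algebra_1 \<Rightarrow> 'a"
  assumes "p < 1" "q < 1" "0 \<le> s" "r + s < 1"
  assumes jordan: "\<And>x y. norm (jordan_defect h x y)
      \<le> \<theta> * (norm x powr p + norm y powr q + norm x powr r * norm y powr s)"
  assumes additive: "\<And>x y. norm (additive_defect h x y)
      \<le> \<theta> * (norm x powr p + norm y powr q + norm x powr r * norm y powr s)"
  shows "additive_map h"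
  unfolding additive_map_def
proof (intro allI)
  fix y z :: 'a
  \<comment> \<open>constants are written as multiples of \<open>n powr 0\<close>, which is \<open>1\<close> only for \<open>n \<noteq> 0\<close>\<close>
  define jordan_bound where "jordan_bound w = (\<lambda>n. \<theta> * real n powr p
    + \<theta> * norm w powr q * real n powr 0 + \<theta> * norm w powr s * real n powr r)"
    for w :: 'a
  define bound where "bound = (\<lambda>n. \<theta> * norm y powr p * real n powr (2 * p)
    + \<theta> * norm z powr q * real n powr (2 * q)
    + \<theta> * (norm y powr r * norm z powr s) * real n powr (2 * (r + s))
    + jordan_bound (y + z) n + jordan_bound y n + jordan_bound z n)"
  have "norm (additive_defect h y z) \<le> 0"
  proof (rule nonpos_if_mult_le_smallo)
    show "bound \<in> o(\<lambda>n. real n powr 2)"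
      unfolding bound_def jordan_bound_def
      by (intro sum_in_smallo const_mult_powr_smallo_powr) (use assms in auto)
    show "\<forall>\<^sub>F n in sequentially. 0 < real n powr 2 \<and> real n powr 2 * norm (additive_defect h y z) \<le> bound n"
      using eventually_ge_at_top[of "1::nat"]
    proof eventually_elim
      case (elim n)
      define t where "t = real n"
      have t: "t \<ge> 1" "real n powr 2 = t * t"
        using elim by (simp_all add: t_def power2_eq_square)
      have double: "real n powr (2 * a) = real n powr a * real n powr a" for a
        by (metis mult_2 powr_add)
      have scaled: "norm (additive_defect h ((t * t) *\<^sub>R y) ((t * t) *\<^sub>R z))
          \<le> \<theta> * norm y powr p * real n powr (2 * p) + \<theta> * norm z powr q * real n powr (2 * q)
            + \<theta> * (norm y powr r * norm z powr s) * real n powr (2 * (r + s))"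
        using additive[of "(t * t) *\<^sub>R y" "(t * t) *\<^sub>R z"] t unfolding double
        by (simp add: t_def powr_mult powr_add algebra_simps)
      have jordan_scalar: "norm (jordan_defect h (of_real t) w) \<le> jordan_bound w n" for w
        using jordan[of "of_real t" w] t by (simp add: t_def jordan_bound_def algebra_simps)
      have "real n powr 2 * norm (additive_defect h y z)
          \<le> norm (additive_defect h ((t * t) *\<^sub>R y) ((t * t) *\<^sub>R z))
            + norm (jordan_defect h (of_real t) (y + z))
            + norm (jordan_defect h (of_real t) y) + norm (jordan_defect h (of_real t) z)"
        unfolding t(2) by (rule norm_additive_defect_le_jordan_defects)
      also have "\<dots> \<le> bound n"
        unfolding bound_def by (intro add_mono scaled jordan_scalar)
      finally show ?case
        using t by simp
    qed
  qed simp
  then show "h (y + z) = h y + h z"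
    by (simp add: additive_defect_def algebra_simps)
qed

lemma jordan_identity_if_defect_powr_bounded:
  fixes h :: "'a::real_normed_algebra_1 \<Rightarrow> 'a"
  assumes "additive_map h" "p < 2" "r < 2"
  assumes jordan: "\<And>x y. norm (jordan_defect h x y)
      \<le> \<theta> * (norm x powr p + norm y powr q + norm x powr r * norm y powr s)"
  shows "h (x * y * x) = h x * y * x + x * h y * x + x * y * h x"
proof -
  define bound where "bound = (\<lambda>n. \<theta> * norm x powr p * real n powr p
    + \<theta> * norm y powr q * real n powr 0 + \<theta> * (norm x powr r * norm y powr s) * real n powr r)"
  have "norm (jordan_defect h x y) \<le> 0"
  proof (rule nonpos_if_mult_le_smallo)
    show "bound \<in> o(\<lambda>n. real n powr 2)"
      unfolding bound_def
      by (intro sum_in_smallo const_mult_powr_smallo_powr) (use assms in auto)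
    show "\<forall>\<^sub>F n in sequentially. 0 < real n powr 2 \<and> real n powr 2 * norm (jordan_defect h x y) \<le> bound n"
      using eventually_ge_at_top[of "1::nat"]
    proof eventually_elim
      case (elim n)
      then have "real n powr 2 * norm (jordan_defect h x y) = norm (jordan_defect h (real n *\<^sub>R x) y)"
        by (simp add: jordan_defect_scaleR_of_nat[OF assms(1)] power2_eq_square)
      also have "\<dots> \<le> bound n"
        using jordan[of "real n *\<^sub>R x" y] elim by (simp add: bound_def powr_mult algebra_simps)
      finally show ?case using elim by simp
    qed
  qed simp
  then show ?thesis
    by (simp add: jordan_defect_def algebra_simps)
qed

theorem corollary2p4:
  fixes h :: "'a::{real_normed_algebra_1, banach} \<Rightarrow> 'a"
    and \<theta> p q r s :: real
  assumes "0 < \<theta>" "\<theta> < 1" "0 < p" "p < 1" "0 < q" "q < 1"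
    "0 < r" "r < 1" "0 < s" "s < 1" "r + s < 1"
  assumes "\<And>x y. norm (h (x * y * x) - h x * y * x - x * h y * x - x * y * h x)
      \<le> \<theta> * (norm x powr p + norm y powr q + norm x powr r * norm y powr s)"
  assumes "\<And>x y. norm (h (x + y) - h x - h y)
      \<le> \<theta> * (norm x powr p + norm y powr q + norm x powr r * norm y powr s)"
  shows "jordan_triple_derivation h"
proof -
  note jordan = assms(12)[folded jordan_defect_def]
  note additive = assms(13)[folded additive_defect_def]
  have "additive_map h"
    by (rule additive_map_if_defects_powr_bounded[OF _ _ _ _ jordan additive]) (use assms(1-11) in auto)
  moreover have "h (x * y * x) = h x * y * x + x * h y * x + x * y * h x" for x y
    by (rule jordan_identity_if_defect_powr_bounded[OF \<open>additive_map h\<close> _ _ jordan])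
      (use assms(1-11) in auto)
  ultimately show ?thesis
    unfolding jordan_triple_derivation_def by blast
qed

end
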